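(* Consider the triggered urn model described in the context, with trigger probabilities $(p_n)_{n\ge1}\subset(0,1)$ and the convention $p_0=1$. Let $C_n=\sum_{i=0}^{n-1}B_i$ be the number of distinct colors present in the urn at time $n$, and $C_\infty=\sup_n C_n$. Then: (1) If $\sum_{n=0}^\infty p_n<\infty$, then $C_\infty<\infty$ almost surely. (2) If $\sum_{n=0}^\infty p_n=\infty$, then $C_\infty=\infty$ almost surely and $C_n\big/\sum_{i=0}^{n-1}p_i\to 1$ almost surely. In particular, if moreover $\sum_{n=1}^\infty(1-p_n)<\infty$, then there exists an (almost surely finite) random time $N$ such that for every time $n\ge N$ a new color is observed; hence each color is observed only a finite number of times, and only finitely many colors end up being observed more than once.
   Context: Triggered (FAQ) urn model. The urn is empty at time $0$. Let $B_0=1$ and let $(B_n)_{n\ge1}$ be independent Bernoulli random variables with $\Pr(B_n=1)=p_n\in(0,1)$ (write $p_0=1$); the $B$'s are independent of everything else in the construction. Let $F:[1,\infty)\to[0,\infty)$ be strictly increasing with $F(1)>0$ (the update function). Colors are labelled $1,2,\dots$ in order of first appearance, and a history sequence $\mathcal S=(S_n)_{n\ge1}$ records one color per time step. For a color $c$, $K_{n,c}$ denotes the number of times $c$ has been registered in $\mathcal S$ up to and including time $n$; at time $n$ the urn contains, for each color $c$ already present, a weight (number of balls) $F(K_{n,c})$. At each time $n\ge1$: if $B_{n-1}=1$ (trigger), a new color (not yet present) is added with weight $F(1)$ and registered in $\mathcal S$; if $B_{n-1}=0$, a color $c$ among those present is drawn with probability $F(K_{n-1,c})/\sum_{c'}F(K_{n-1,c'})$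 (sum over colors present at time $n-1$), it is registered in $\mathcal S$, and its weight becomes $F(K_{n,c})$. *)

theory Defs
  imports "HOL-Probability.Probability"
begin

definition num_colors :: "(nat \<Rightarrow> 'a \<Rightarrow> bool) \<Rightarrow> nat \<Rightarrow> 'a \<Rightarrow> nat" where
  "num_colors B n \<omega> = (\<Sum>i<n. if B i \<omega> then 1 else 0)"

definition hist :: "(nat \<Rightarrow> 'a \<Rightarrow> nat) \<Rightarrow> nat \<Rightarrow> 'a \<Rightarrow> nat list" where
  "hist S k \<omega> = map (\<lambda>i. S i \<omega>) [1..<Suc k]"

definition trig_hist :: "(nat \<Rightarrow> 'a \<Rightarrow> bool) \<Rightarrow> nat \<Rightarrow> 'a \<Rightarrow> bool list" where
  "trig_hist B k \<omega> = map (\<lambda>i. B i \<omega>) [0..<k]"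

definition reg_count :: "nat list \<Rightarrow> nat \<Rightarrow> nat" where
  "reg_count h c = length (filter (\<lambda>x. x = c) h)"

text \<open>Probability of drawing colour c from the urn whose content is described by history h:
  F(K_c) / sum over present colours c' of F(K_c').\<close>
definition urn_prob :: "(real \<Rightarrow> real) \<Rightarrow> nat list \<Rightarrow> nat \<Rightarrow> real" where
  "urn_prob F h c =
     (if c \<in> set h then F (real (reg_count h c)) / (\<Sum>c'\<in>set h. F (real (reg_count h c'))) else 0)"

end

theory Submission
  imports Defs "HOL-Real_Asymp.Real_Asymp"
begin

(*
  The color count C_n is the number of successes among the independent trigger events
  {B_i}, i < n.  If the trigger probabilities are summable, the first Borel-Cantelli lemma
  leaves only finitely many triggers.  Otherwise C_n / E C_n -> 1 by the Chebyshev argument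
  behind the strong law for pairwise independent events: the variance of C_n is at most
  E C_n, so Borel-Cantelli applies along the times n_k at which E C_n first exceeds k^2,
  and monotonicity of C_n fills the gaps.  If moreover sum (1 - p_n) < infinity, all but
  finitely many steps are triggers; since a drawn color is almost surely one already
  present, the color registered at a trigger time is the new largest label, so from then
  on every registered color is fresh.
*)

lemma tendsto_if_eventually_dist_less_inverse_Suc:
  fixes f :: "'b \<Rightarrow> 'a::metric_space"
  assumes "\<And>m. eventually (\<lambda>x. dist (f x) l < inverse (real (Suc m))) F"
  shows "(f \<longlongrightarrow> l) F"
proof (rule tendstoI)
  fix e :: real
  assume "0 < e"
  then obtain m where m: "inverse (real (Suc m)) < e"
    using reals_Archimedean by blast
  from assms[of m] show "eventually (\<lambda>x. dist (f x) l < e) F"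
    by (rule eventually_mono) (use m in auto)
qed

lemma mono_partial_sums:
  fixes f :: "nat \<Rightarrow> real"
  assumes "\<And>i. 0 \<le> f i"
  shows "mono (\<lambda>n. \<Sum>i<n. f i)"
  by (intro monoI sum_mono2) (auto simp: assms)

lemma filterlim_partial_sums_at_top:
  fixes f :: "nat \<Rightarrow> real"
  assumes nonneg: "\<And>i. 0 \<le> f i" and "\<not> summable f"
  shows "filterlim (\<lambda>n. \<Sum>i<n. f i) at_top sequentially"
  unfolding filterlim_at_top
proof
  fix Z :: real
  have "\<not> (\<forall>n. (\<Sum>i<n. f i) \<le> Z)"
    using summableI_nonneg_bounded[of f Z] assms by blast
  then obtain n where n: "Z \<le> (\<Sum>i<n. f i)"
    by (auto simp: not_le intro: less_imp_le)
  show "eventually (\<lambda>m. Z \<le> (\<Sum>i<m. f i)) sequentially"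
  proof (rule eventually_sequentiallyI)
    fix m assume "n \<le> m"
    then have "(\<Sum>i<n. f i) \<le> (\<Sum>i<m. f i)"
      using nonneg by (intro sum_mono2) auto
    with n show "Z \<le> (\<Sum>i<m. f i)"
      by linarith
  qed
qed

definition first_passage :: "(nat \<Rightarrow> real) \<Rightarrow> real \<Rightarrow> nat" where
  "first_passage a x = (LEAST n. x \<le> a n)"

lemma le_at_first_passage: "x \<le> a n \<Longrightarrow> x \<le> a (first_passage a x)"
  unfolding first_passage_def by (rule LeastI[where P = "\<lambda>n. x \<le> a n"])

lemma first_passage_le: "x \<le> a n \<Longrightarrow> first_passage a x \<le> n"
  unfolding first_passage_def by (rule Least_le[where P = "\<lambda>n. x \<le> a n"])

lemma le_at_first_passage_if_filterlim:
  assumes "filterlim a at_top sequentially"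
  shows "x \<le> a (first_passage a x)"
proof -
  have "eventually (\<lambda>n. x \<le> a n) sequentially"
    using assms unfolding filterlim_at_top by blast
  then obtain n where "x \<le> a n"
    unfolding eventually_sequentially by blast
  then show ?thesis
    by (rule le_at_first_passage)
qed

lemma at_first_passage_le:
  assumes "a 0 < x" and "x \<le> a n" and steps: "\<And>n. a (Suc n) \<le> a n + 1"
  shows "a (first_passage a x) \<le> x + 1"
proof -
  have "first_passage a x \<noteq> 0"
  proof
    assume "first_passage a x = 0"
    then show False
      using le_at_first_passage[where a = a, OF assms(2)] assms(1) by simp
  qed
  then obtain j where j: "first_passage a x = Suc j"
    using not0_implies_Suc by blast
  then have "\<not> x \<le> a j"
    using not_less_Least[of j "\<lambda>n. x \<le> a n"] unfolding first_passage_def by simp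
  then show ?thesis
    using steps[of j] j by simp
qed

lemma floor_sqrt_bounds:
  fixes x :: real
  assumes "0 \<le> x"
  shows "real (nat \<lfloor>sqrt x\<rfloor>) ^ 2 \<le> x" and "x < (real (nat \<lfloor>sqrt x\<rfloor>) + 1) ^ 2"
proof -
  have k: "real (nat \<lfloor>sqrt x\<rfloor>) = of_int \<lfloor>sqrt x\<rfloor>"
    using assms by simp
  have floor: "of_int \<lfloor>sqrt x\<rfloor> \<le> sqrt x" "sqrt x < of_int \<lfloor>sqrt x\<rfloor> + 1"
    by linarith+
  have "(of_int \<lfloor>sqrt x\<rfloor>) ^ 2 \<le> sqrt x ^ 2"
    by (rule power_mono[OF floor(1)]) (simp add: assms)
  moreover have "sqrt x ^ 2 < (of_int \<lfloor>sqrt x\<rfloor> + 1) ^ 2"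
    by (rule power_strict_mono[OF floor(2)]) (simp_all add: assms)
  ultimately have "real (nat \<lfloor>sqrt x\<rfloor>) ^ 2 \<le> sqrt x ^ 2" "sqrt x ^ 2 < (real (nat \<lfloor>sqrt x\<rfloor>) + 1) ^ 2"
    unfolding k by simp_all
  then show "real (nat \<lfloor>sqrt x\<rfloor>) ^ 2 \<le> x" "x < (real (nat \<lfloor>sqrt x\<rfloor>) + 1) ^ 2"
    using assms by simp_all
qed

lemma first_passage_bracket:
  fixes a :: "nat \<Rightarrow> real"
  assumes "mono a" and "filterlim a at_top sequentially" and "x \<le> a n" and "a n < y"
  shows "first_passage a x \<le> n" and "n < first_passage a y"
proof -
  show "first_passage a x \<le> n"
    using \<open>x \<le> a n\<close> by (rule first_passage_le)
  show "n < first_passage a y"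
  proof (rule ccontr)
    assume "\<not> n < first_passage a y"
    then have "a (first_passage a y) \<le> a n"
      by (intro monoD[OF \<open>mono a\<close>]) simp
    moreover have "y \<le> a (first_passage a y)"
      using assms(2) by (rule le_at_first_passage_if_filterlim)
    ultimately show False
      using \<open>a n < y\<close> by simp
  qed
qed

lemma ratio_bounds_between_square_passages:
  fixes a C :: "nat \<Rightarrow> real"
  assumes a_mono: "mono a" and a_0: "a 0 = 0" and a_steps: "\<And>n. a (Suc n) \<le> a n + 1"
    and a_lim: "filterlim a at_top sequentially"
    and C_mono: "mono C" and C_nonneg: "\<And>n. 0 \<le> C n"
    and k: "1 \<le> k" "real k ^ 2 \<le> a n" "a n < real (Suc k) ^ 2"
  defines "ns \<equiv> \<lambda>k. first_passage a (real k ^ 2)"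
  shows "C (ns k) / a (ns k) * (real k ^ 2 / real (Suc k) ^ 2) \<le> C n / a n"
    and "C n / a n \<le> C (ns (Suc k)) / a (ns (Suc k)) * ((real (Suc k) ^ 2 + 1) / real k ^ 2)"
proof -
  have a_nonneg: "0 \<le> a m" for m
    using monoD[OF a_mono, of 0 m] a_0 by simp
  have ns_ge: "real j ^ 2 \<le> a (ns j)" for j
    unfolding ns_def using a_lim by (rule le_at_first_passage_if_filterlim)
  have ns_pos: "0 < a (ns j)" if "1 \<le> j" for j
    using ns_ge[of j] that by (simp add: less_le_trans[of 0 "real j ^ 2"])
  have "ns k \<le> n" "n < ns (Suc k)"
    unfolding ns_def using first_passage_bracket[OF a_mono a_lim k(2,3)] .
  then have C_n: "C (ns k) \<le> C n" "C n \<le> C (ns (Suc k))"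
    by (simp_all add: monoD[OF C_mono])
  have k_pos: "0 < real k ^ 2"
    using k(1) by simp
  then have a_pos: "0 < a n"
    using k(2) by linarith
  have "real k ^ 2 / real (Suc k) ^ 2 \<le> a (ns k) / a n"
    using a_nonneg ns_ge[of k] a_pos k(3) by (intro frac_le) (auto intro: less_imp_le)
  then have "C (ns k) / a (ns k) * (real k ^ 2 / real (Suc k) ^ 2) \<le> C (ns k) / a (ns k) * (a (ns k) / a n)"
    using a_nonneg C_nonneg by (intro mult_left_mono) simp_all
  also have "\<dots> = C (ns k) / a n"
    using ns_pos[OF k(1)] by simp
  also have "\<dots> \<le> C n / a n"
    using C_n a_pos by (simp add: divide_right_mono)
  finally show "C (ns k) / a (ns k) * (real k ^ 2 / real (Suc k) ^ 2) \<le> C n / a n" .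
  have "a (ns (Suc k)) \<le> real (Suc k) ^ 2 + 1"
    unfolding ns_def
    by (rule at_first_passage_le[OF _ ns_ge[of "Suc k", unfolded ns_def] a_steps]) (simp add: a_0)
  then have "a (ns (Suc k)) / a n \<le> (real (Suc k) ^ 2 + 1) / real k ^ 2"
    using a_nonneg k(2) k_pos by (intro frac_le) auto
  have "C n / a n \<le> C (ns (Suc k)) / a n"
    using C_n a_pos by (simp add: divide_right_mono)
  also have "\<dots> = C (ns (Suc k)) / a (ns (Suc k)) * (a (ns (Suc k)) / a n)"
    using ns_pos[of "Suc k"] by simp
  also have "\<dots> \<le> C (ns (Suc k)) / a (ns (Suc k)) * ((real (Suc k) ^ 2 + 1) / real k ^ 2)"
    using \<open>a (ns (Suc k)) / a n \<le> _\<close> a_nonneg C_nonneg by (intro mult_left_mono) simp_all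
  finally show "C n / a n \<le> C (ns (Suc k)) / a (ns (Suc k)) * ((real (Suc k) ^ 2 + 1) / real k ^ 2)" .
qed

(* Since a grows by at most 1 per step, its values at consecutive passage times of k^2
   differ by a factor tending to 1, and monotonicity of C fills the gaps. *)
lemma ratio_tendsto_1_if_tendsto_along_square_passages:
  fixes a C :: "nat \<Rightarrow> real"
  assumes a_mono: "mono a" and a_0: "a 0 = 0" and a_steps: "\<And>n. a (Suc n) \<le> a n + 1"
    and a_lim: "filterlim a at_top sequentially"
    and C_mono: "mono C" and C_nonneg: "\<And>n. 0 \<le> C n"
    and along: "(\<lambda>k. C (first_passage a (real k ^ 2)) / a (first_passage a (real k ^ 2))) \<longlonglongrightarrow> 1"
  shows "(\<lambda>n. C n / a n) \<longlonglongrightarrow> 1"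
proof -
  define r where "r = (\<lambda>k. C (first_passage a (real k ^ 2)) / a (first_passage a (real k ^ 2)))"
  define kn where "kn = (\<lambda>n. nat \<lfloor>sqrt (a n)\<rfloor>)"
  have bounds: "r (kn n) * (real (kn n) ^ 2 / real (Suc (kn n)) ^ 2) \<le> C n / a n"
      "C n / a n \<le> r (Suc (kn n)) * ((real (Suc (kn n)) ^ 2 + 1) / real (kn n) ^ 2)"
    if "1 \<le> a n" for n
  proof -
    have k_sq: "real (kn n) ^ 2 \<le> a n" "a n < real (Suc (kn n)) ^ 2"
      using floor_sqrt_bounds[of "a n"] that unfolding kn_def by (simp_all add: add.commute)
    moreover have "1 \<le> kn n"
      using k_sq(2) that by (cases "kn n") auto
    ultimately show "r (kn n) * (real (kn n) ^ 2 / real (Suc (kn n)) ^ 2) \<le> C n / a n"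
      "C n / a n \<le> r (Suc (kn n)) * ((real (Suc (kn n)) ^ 2 + 1) / real (kn n) ^ 2)"
      unfolding r_def
      using ratio_bounds_between_square_passages[OF a_mono a_0 a_steps a_lim C_mono C_nonneg] by blast+
  qed
  have "filterlim (\<lambda>x::real. nat \<lfloor>sqrt x\<rfloor>) at_top at_top"
    by real_asymp
  from filterlim_compose[OF this a_lim] have kn_lim: "filterlim kn at_top sequentially"
    unfolding kn_def .
  have r_lim: "r \<longlonglongrightarrow> 1"
    using along unfolding r_def .
  have "(\<lambda>k. real k ^ 2 / real (Suc k) ^ 2) \<longlonglongrightarrow> 1"
    by real_asymp
  from tendsto_mult[OF r_lim this]
  have lower_lim: "(\<lambda>k. r k * (real k ^ 2 / real (Suc k) ^ 2)) \<longlonglongrightarrow> 1"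
    by simp
  have "(\<lambda>k. (real (Suc k) ^ 2 + 1) / real k ^ 2) \<longlonglongrightarrow> 1"
    by real_asymp
  from tendsto_mult[OF LIMSEQ_Suc[OF r_lim] this]
  have upper_lim: "(\<lambda>k. r (Suc k) * ((real (Suc k) ^ 2 + 1) / real k ^ 2)) \<longlonglongrightarrow> 1"
    by simp
  have large: "eventually (\<lambda>n. 1 \<le> a n) sequentially"
    using a_lim unfolding filterlim_at_top by blast
  show ?thesis
  proof (rule tendsto_sandwich)
    show "eventually (\<lambda>n. r (kn n) * (real (kn n) ^ 2 / real (Suc (kn n)) ^ 2) \<le> C n / a n) sequentially"
      using large by (rule eventually_mono) (rule bounds)
    show "eventually (\<lambda>n. C n / a n \<le> r (Suc (kn n)) * ((real (Suc (kn n)) ^ 2 + 1) / real (kn n) ^ 2)) sequentially"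
      using large by (rule eventually_mono) (rule bounds)
    show "(\<lambda>n. r (kn n) * (real (kn n) ^ 2 / real (Suc (kn n)) ^ 2)) \<longlonglongrightarrow> 1"
      using filterlim_compose[OF lower_lim kn_lim] by simp
    show "(\<lambda>n. r (Suc (kn n)) * ((real (Suc (kn n)) ^ 2 + 1) / real (kn n) ^ 2)) \<longlonglongrightarrow> 1"
      using filterlim_compose[OF upper_lim kn_lim] by simp
  qed
qed

context prob_space
begin

lemma integrable_indicator_event [simp]: "A \<in> events \<Longrightarrow> integrable M (indicator A :: 'a \<Rightarrow> real)"
  by (simp add: less_top[symmetric])

lemma centered_indicators_mult:
  assumes [measurable]: "A \<in> events" "B \<in> events"
  defines "X \<equiv> \<lambda>\<omega>. (indicator A \<omega> - prob A) * (indicator B \<omega> - prob B) :: real"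
  shows "integrable M X" and "expectation X = prob (A \<inter> B) - prob A * prob B"
proof -
  have X: "X = (\<lambda>\<omega>. indicator (A \<inter> B) \<omega> - prob B * indicator A \<omega> - prob A * indicator B \<omega> + prob A * prob B)"
    unfolding X_def by (auto simp: indicator_def fun_eq_iff algebra_simps)
  show "integrable M X"
    unfolding X by simp
  show "expectation X = prob (A \<inter> B) - prob A * prob B"
    unfolding X by (simp add: prob_space)
qed

lemma variance_indicator_count_le:
  fixes A :: "nat \<Rightarrow> 'a set"
  assumes A_events [measurable]: "\<And>i. A i \<in> events"
    and pairwise_indep: "\<And>i j. i \<noteq> j \<Longrightarrow> prob (A i \<inter> A j) = prob (A i) * prob (A j)"
  shows "variance (\<lambda>\<omega>. \<Sum>i<n. indicator (A i) \<omega> :: real) \<le> (\<Sum>i<n. prob (A i))"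
proof -
  have mean: "expectation (\<lambda>\<omega>. \<Sum>i<n. indicator (A i) \<omega> :: real) = (\<Sum>i<n. prob (A i))"
    by simp
  have square: "((\<Sum>i<n. indicator (A i) \<omega>) - (\<Sum>i<n. prob (A i)))\<^sup>2 =
      (\<Sum>i<n. \<Sum>j<n. (indicator (A i) \<omega> - prob (A i)) * (indicator (A j) \<omega> - prob (A j)) :: real)" for \<omega>
    by (simp add: power2_eq_square sum_product sum_subtractf[symmetric])
  have "variance (\<lambda>\<omega>. \<Sum>i<n. indicator (A i) \<omega> :: real) =
      (\<Sum>i<n. \<Sum>j<n. prob (A i \<inter> A j) - prob (A i) * prob (A j))"
    unfolding mean square by (simp add: centered_indicators_mult)
  also have "\<dots> = (\<Sum>i<n. \<Sum>j<n. if i = j then prob (A i) - prob (A i) * prob (A i) else 0)"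
    by (intro sum.cong refl) (auto simp: pairwise_indep)
  also have "\<dots> = (\<Sum>i<n. prob (A i) - prob (A i) * prob (A i))"
    by (intro sum.cong refl) simp
  also have "\<dots> \<le> (\<Sum>i<n. prob (A i))"
    by (intro sum_mono) simp
  finally show ?thesis .
qed

lemma prob_indicator_count_deviation_le:
  fixes A :: "nat \<Rightarrow> 'a set"
  assumes A_events [measurable]: "\<And>i. A i \<in> events"
    and pairwise_indep: "\<And>i j. i \<noteq> j \<Longrightarrow> prob (A i \<inter> A j) = prob (A i) * prob (A j)"
    and "0 < c"
  shows "prob {\<omega> \<in> space M. c \<le> \<bar>(\<Sum>i<n. indicator (A i) \<omega>) - (\<Sum>i<n. prob (A i))\<bar>}
    \<le> (\<Sum>i<n. prob (A i)) / c\<^sup>2"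
proof -
  define X where "X = (\<lambda>\<omega>. \<Sum>i<n. indicator (A i) \<omega> :: real)"
  have X_meas: "X \<in> borel_measurable M"
    unfolding X_def by measurable
  have "0 \<le> X \<omega>" "X \<omega> \<le> real n" for \<omega>
  proof -
    show "0 \<le> X \<omega>"
      unfolding X_def by (simp add: sum_nonneg)
    have "X \<omega> \<le> (\<Sum>i<n. 1)"
      unfolding X_def by (intro sum_mono) (simp add: indicator_def)
    then show "X \<omega> \<le> real n"
      by simp
  qed
  then have "integrable M (\<lambda>\<omega>. (X \<omega>)\<^sup>2)"
    using X_meas by (intro integrable_const_bound[where B = "real n ^ 2"]) (auto intro!: power_mono)
  from Chebyshev_inequality[OF X_meas this \<open>0 < c\<close>]
  have "prob {\<omega> \<in> space M. c \<le> \<bar>X \<omega> - (\<Sum>i<n. prob (A i))\<bar>} \<le> variance X / c\<^sup>2"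
    by (simp add: X_def)
  also have "\<dots> \<le> (\<Sum>i<n. prob (A i)) / c\<^sup>2"
  proof (rule divide_right_mono)
    show "variance X \<le> (\<Sum>i<n. prob (A i))"
      unfolding X_def by (intro variance_indicator_count_le[where A = A] pairwise_indep A_events)
  qed simp
  finally show ?thesis
    by (simp add: X_def)
qed

lemma AE_eventually_indicator_count_ratio_close:
  fixes A :: "nat \<Rightarrow> 'a set"
  assumes A_events [measurable]: "\<And>i. A i \<in> events"
    and pairwise_indep: "\<And>i j. i \<noteq> j \<Longrightarrow> prob (A i \<inter> A j) = prob (A i) * prob (A j)"
    and ns_ge: "\<And>k. real k ^ 2 \<le> (\<Sum>i<ns k. prob (A i))" and "0 < e"
  shows "AE \<omega> in M. eventually (\<lambda>k.
    \<bar>(\<Sum>i<ns k. indicator (A i) \<omega>) / (\<Sum>i<ns k. prob (A i)) - 1\<bar> < e) sequentially"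
proof -
  define a where "a k = (\<Sum>i<ns k. prob (A i))" for k
  define X where "X k \<omega> = (\<Sum>i<ns k. indicator (A i) \<omega> :: real)" for k \<omega>
  define E where "E k = {\<omega> \<in> space M. e * a k \<le> \<bar>X k \<omega> - a k\<bar>}" for k
  have E_events [measurable]: "E k \<in> events" for k
    unfolding E_def X_def by measurable
  have a_pos: "real k ^ 2 \<le> a k" "0 < a k" if "1 \<le> k" for k
    using ns_ge[of k] that unfolding a_def by (auto intro: less_le_trans[of _ "real k ^ 2"])
  have prob_E: "prob (E k) \<le> inverse (e\<^sup>2) * inverse (real k ^ 2)" if "1 \<le> k" for k
  proof -
    have "0 < e * a k"
      using a_pos[OF that] \<open>0 < e\<close> by simp
    then have "prob (E k) \<le> a k / (e * a k)\<^sup>2"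
      unfolding E_def X_def a_def
      by (intro prob_indicator_count_deviation_le[where A = A] pairwise_indep) (simp_all add: A_events)
    also have "\<dots> = inverse (e\<^sup>2) * inverse (a k)"
      using a_pos[OF that] \<open>0 < e\<close> by (simp add: field_simps power2_eq_square)
    also have "\<dots> \<le> inverse (e\<^sup>2) * inverse (real k ^ 2)"
      using a_pos[OF that] that by (intro mult_left_mono le_imp_inverse_le) auto
    finally show ?thesis .
  qed
  have "summable (\<lambda>k. prob (E k))"
    by (rule summable_comparison_test'[where N = 1, OF summable_mult[OF inverse_power_summable[of 2]]])
      (use prob_E in auto)
  then have "AE \<omega> in M. eventually (\<lambda>k. \<omega> \<in> space M - E k) sequentially"
    by (intro borel_cantelli_AE1 E_events) (auto simp: emeasure_eq_measure)
  then have "AE \<omega> in M. eventually (\<lambda>k. \<bar>X k \<omega> / a k - 1\<bar> < e) sequentially"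
  proof (rule eventually_mono)
    fix \<omega> assume "eventually (\<lambda>k. \<omega> \<in> space M - E k) sequentially"
    with eventually_ge_at_top[of 1] show "eventually (\<lambda>k. \<bar>X k \<omega> / a k - 1\<bar> < e) sequentially"
    proof eventually_elim
      case (elim k)
      then have "\<bar>X k \<omega> - a k\<bar> < e * a k"
        unfolding E_def by auto
      then show ?case
        using a_pos(2)[OF elim(1)] by (simp add: field_simps abs_less_iff)
    qed
  qed
  then show ?thesis
    unfolding X_def a_def .
qed

theorem indicator_count_ratio_tendsto_1:
  fixes A :: "nat \<Rightarrow> 'a set"
  assumes A_events [measurable]: "\<And>i. A i \<in> events"
    and pairwise_indep: "\<And>i j. i \<noteq> j \<Longrightarrow> prob (A i \<inter> A j) = prob (A i) * prob (A j)"
    and diverges: "\<not> summable (\<lambda>i. prob (A i))"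
  shows "AE \<omega> in M. (\<lambda>n. (\<Sum>i<n. indicator (A i) \<omega>) / (\<Sum>i<n. prob (A i))) \<longlonglongrightarrow> 1"
proof -
  define a where "a = (\<lambda>n. \<Sum>i<n. prob (A i))"
  define ns where "ns k = first_passage a (real k ^ 2)" for k
  have a_lim: "filterlim a at_top sequentially"
    unfolding a_def using diverges by (intro filterlim_partial_sums_at_top) auto
  have ns_ge: "real k ^ 2 \<le> a (ns k)" for k
    unfolding ns_def using a_lim by (rule le_at_first_passage_if_filterlim)
  have "AE \<omega> in M. eventually (\<lambda>k.
      \<bar>(\<Sum>i<ns k. indicator (A i) \<omega>) / a (ns k) - 1\<bar> < inverse (real (Suc m))) sequentially" for m
    using ns_ge unfolding a_def
    by (intro AE_eventually_indicator_count_ratio_close[where A = A] pairwise_indep) (simp_all add: A_events)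
  then have "AE \<omega> in M. \<forall>m. eventually (\<lambda>k.
      \<bar>(\<Sum>i<ns k. indicator (A i) \<omega>) / a (ns k) - 1\<bar> < inverse (real (Suc m))) sequentially"
    unfolding AE_all_countable by blast
  then have "AE \<omega> in M. (\<lambda>n. (\<Sum>i<n. indicator (A i) \<omega>) / a n) \<longlonglongrightarrow> 1"
  proof (rule eventually_mono)
    fix \<omega> assume "\<forall>m. eventually (\<lambda>k.
      \<bar>(\<Sum>i<ns k. indicator (A i) \<omega>) / a (ns k) - 1\<bar> < inverse (real (Suc m))) sequentially"
    then have along: "(\<lambda>k. (\<Sum>i<ns k. indicator (A i) \<omega>) / a (ns k)) \<longlonglongrightarrow> 1"
      by (intro tendsto_if_eventually_dist_less_inverse_Suc) (simp add: dist_real_def)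
    show "(\<lambda>n. (\<Sum>i<n. indicator (A i) \<omega>) / a n) \<longlonglongrightarrow> 1"
      by (rule ratio_tendsto_1_if_tendsto_along_square_passages[OF _ _ _ a_lim _ _ along[unfolded ns_def]])
        (simp_all add: a_def mono_partial_sums sum_nonneg)
  qed
  then show ?thesis
    unfolding a_def .
qed

end

lemma num_colors_Suc: "num_colors B (Suc n) \<omega> = num_colors B n \<omega> + (if B n \<omega> then 1 else 0)"
  unfolding num_colors_def by simp

lemma num_colors_mono: "m \<le> n \<Longrightarrow> num_colors B m \<omega> \<le> num_colors B n \<omega>"
  unfolding num_colors_def by (intro sum_mono2) auto

lemma num_colors_le_if_no_triggers_from:
  assumes "\<And>i. N \<le> i \<Longrightarrow> \<not> B i \<omega>"
  shows "num_colors B n \<omega> \<le> num_colors B N \<omega>"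
proof (cases "n \<le> N")
  case False
  then have "N \<le> n"
    by simp
  then have "num_colors B n \<omega> = num_colors B N \<omega>"
    by (induction n rule: dec_induct) (auto simp: num_colors_Suc assms)
  then show ?thesis by simp
qed (rule num_colors_mono)

lemma SUP_enat_less_infinity: "(\<And>n. f n \<le> K) \<Longrightarrow> (SUP n. enat (f n)) < \<infinity>"
  by (rule le_less_trans[of _ "enat K"]) (auto intro: SUP_least)

lemma SUP_enat_eq_infinity:
  assumes "filterlim (\<lambda>n. real (f n)) at_top sequentially"
  shows "(SUP n. enat (f n)) = \<infinity>"
proof -
  have "\<exists>n. j < f n" for j
  proof -
    have "eventually (\<lambda>n. real j < real (f n)) sequentially"
      using assms unfolding filterlim_at_top_dense by blast
    then obtain n where "real j < real (f n)"
      by (auto simp: eventually_sequentially)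
    then show ?thesis
      by auto
  qed
  then have "(SUP n. enat (f n)) = top"
    unfolding SUP_eq_top_iff by (metis UNIV_I enat_ord_simps(2) less_infinityE top_enat_def)
  then show ?thesis
    by (simp add: top_enat_def)
qed

lemma filterlim_at_top_if_ratio_tendsto_1:
  fixes f g :: "nat \<Rightarrow> real"
  assumes ratio: "(\<lambda>n. f n / g n) \<longlonglongrightarrow> 1" and g_lim: "filterlim g at_top sequentially"
  shows "filterlim f at_top sequentially"
proof -
  have "filterlim (\<lambda>n. f n / g n * g n) at_top sequentially"
    by (rule filterlim_tendsto_pos_mult_at_top[OF ratio _ g_lim]) simp
  moreover have "eventually (\<lambda>n. 0 < g n) sequentially"
    using g_lim unfolding filterlim_at_top_dense by (rule spec)
  then have "eventually (\<lambda>n. f n / g n * g n = f n) sequentially"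
    by (rule eventually_mono) simp
  ultimately show ?thesis
    by (rule iffD1[OF filterlim_cong[OF refl refl], rotated])
qed

lemma color_le_num_colors:
  assumes trigger: "\<And>n. 1 \<le> n \<Longrightarrow> B (n - 1) \<omega> \<Longrightarrow> S n \<omega> = num_colors B n \<omega>"
    and drawn: "\<And>n. 1 \<le> n \<Longrightarrow> \<not> B (n - 1) \<omega> \<Longrightarrow> S n \<omega> \<in> (\<lambda>m. S m \<omega>) ` {1..<n}"
  shows "1 \<le> n \<Longrightarrow> S n \<omega> \<le> num_colors B n \<omega>"
proof (induction n rule: less_induct)
  case (less n)
  show ?case
  proof (cases "B (n - 1) \<omega>")
    case True
    then show ?thesis using trigger less.prems by simp
  next
    case False
    then obtain m where "1 \<le> m" "m < n" "S n \<omega> = S m \<omega>"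
      using drawn[OF less.prems False] by auto
    then show ?thesis
      using less.IH[of m] num_colors_mono[of m n B \<omega>] by simp
  qed
qed

lemma fresh_color_after_triggers:
  assumes trigger: "\<And>n. 1 \<le> n \<Longrightarrow> B (n - 1) \<omega> \<Longrightarrow> S n \<omega> = num_colors B n \<omega>"
    and bound: "\<And>n. 1 \<le> n \<Longrightarrow> S n \<omega> \<le> num_colors B n \<omega>"
    and triggers: "\<And>i. N \<le> i \<Longrightarrow> B i \<omega>" and "N < n"
  shows "S n \<omega> \<notin> (\<lambda>m. S m \<omega>) ` {1..<n}"
proof
  assume "S n \<omega> \<in> (\<lambda>m. S m \<omega>) ` {1..<n}"
  then obtain m where m: "1 \<le> m" "m < n" "S n \<omega> = S m \<omega>"
    by auto
  have "m \<le> n - 1"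
    using m(2) by simp
  then have "S m \<omega> \<le> num_colors B (n - 1) \<omega>"
    using bound[OF m(1)] num_colors_mono[of m "n - 1" B \<omega>] by simp
  moreover have "S n \<omega> = num_colors B (n - 1) \<omega> + 1"
    using trigger[of n] triggers[of "n - 1"] num_colors_Suc[of B "n - 1" \<omega>] \<open>N < n\<close> by simp
  ultimately show False
    using m(3) by simp
qed

lemma eventually_fresh_neq:
  fixes s :: "nat \<Rightarrow> 'b"
  assumes fresh: "\<And>n. N \<le> n \<Longrightarrow> s n \<notin> s ` {1..<n}"
    and "1 \<le> m" "m < n" "N \<le> n"
  shows "s m \<noteq> s n"
proof -
  have "s m \<in> s ` {1..<n}"
    using assms(2,3) by simp
  then show ?thesis
    using fresh[OF \<open>N \<le> n\<close>] by auto
qed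

lemma finite_fibre_if_eventually_fresh:
  fixes s :: "nat \<Rightarrow> 'b"
  assumes fresh: "\<And>n. N \<le> n \<Longrightarrow> s n \<notin> s ` {1..<n}"
  shows "finite {n. 1 \<le> n \<and> s n = c}"
proof (cases "\<exists>n\<^sub>0 \<ge> N. 1 \<le> n\<^sub>0 \<and> s n\<^sub>0 = c")
  case True
  then obtain n\<^sub>0 where n\<^sub>0: "N \<le> n\<^sub>0" "1 \<le> n\<^sub>0" "s n\<^sub>0 = c"
    by blast
  have "n \<le> n\<^sub>0" if "s n = c" for n
  proof (rule ccontr)
    assume "\<not> n \<le> n\<^sub>0"
    then have "s n\<^sub>0 \<noteq> s n"
      using eventually_fresh_neq[OF fresh n\<^sub>0(2)] n\<^sub>0(1) by simp
    then show False
      using that n\<^sub>0(3) by simp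
  qed
  then have "{n. 1 \<le> n \<and> s n = c} \<subseteq> {..n\<^sub>0}"
    by auto
  then show ?thesis
    using finite_subset by blast
next
  case False
  then have "{n. 1 \<le> n \<and> s n = c} \<subseteq> {..<N}"
    by (auto simp: not_le)
  then show ?thesis
    using finite_subset by blast
qed

lemma finite_repeated_values_if_eventually_fresh:
  fixes s :: "nat \<Rightarrow> 'b"
  assumes fresh: "\<And>n. N \<le> n \<Longrightarrow> s n \<notin> s ` {1..<n}"
  shows "finite {c. 2 \<le> card {n. 1 \<le> n \<and> s n = c}}"
proof (rule finite_subset)
  show "{c. 2 \<le> card {n. 1 \<le> n \<and> s n = c}} \<subseteq> s ` {1..<N}"
  proof (rule subsetI, rule ccontr)
    fix c
    assume c: "c \<in> {c. 2 \<le> card {n. 1 \<le> n \<and> s n = c}}" and "c \<notin> s ` {1..<N}"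
    then have late: "N \<le> n" if "1 \<le> n" "s n = c" for n
      using that imageI[of n "{1..<N}" s] by (auto simp: not_le)
    have "x = y" if x: "1 \<le> x" "s x = c" and y: "1 \<le> y" "s y = c" for x y
    proof (rule ccontr)
      assume "x \<noteq> y"
      then consider "x < y" | "y < x"
        by linarith
      then show False
      proof cases
        case 1
        then show False
          using eventually_fresh_neq[OF fresh x(1) 1 late[OF y]] x(2) y(2) by simp
      next
        case 2
        then show False
          using eventually_fresh_neq[OF fresh y(1) 2 late[OF x]] x(2) y(2) by simp
      qed
    qed
    then have "card {n. 1 \<le> n \<and> s n = c} \<le> Suc 0"
      using card_le_Suc0_iff_eq[OF finite_fibre_if_eventually_fresh[OF fresh]] by blast
    with c show False
      by simp
  qed
qed simp

lemma hist_eq_iff: "hist S k \<omega> = h \<longleftrightarrow> length h = k \<and> (\<forall>i<k. S (Suc i) \<omega> = h ! i)"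
  unfolding hist_def list_eq_iff_nth_eq by (auto simp del: upt_Suc simp: nth_upt)

lemma trig_hist_eq_iff: "trig_hist B k \<omega> = bs \<longleftrightarrow> length bs = k \<and> (\<forall>i<k. B i \<omega> = bs ! i)"
  unfolding trig_hist_def list_eq_iff_nth_eq by auto

context prob_space
begin

lemma AE_SUP_num_colors_finite:
  assumes [measurable]: "\<And>i. B i \<in> measurable M (count_space UNIV)"
    and "summable (\<lambda>i. prob {\<omega> \<in> space M. B i \<omega>})"
  shows "AE \<omega> in M. (SUP n. enat (num_colors B n \<omega>)) < \<infinity>"
proof -
  have [simp]: "{\<omega> \<in> space M. B i \<omega>} \<in> events" for i
    by measurable
  have "AE \<omega> in M. eventually (\<lambda>n. \<omega> \<in> space M - {\<omega> \<in> space M. B n \<omega>}) sequentially"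
    using assms(2) by (intro borel_cantelli_AE1) (simp_all add: emeasure_eq_measure)
  then show ?thesis
  proof (rule eventually_mono)
    fix \<omega> assume "eventually (\<lambda>n. \<omega> \<in> space M - {\<omega> \<in> space M. B n \<omega>}) sequentially"
    then obtain N where "\<And>i. N \<le> i \<Longrightarrow> \<not> B i \<omega>"
      unfolding eventually_sequentially by blast
    then have "num_colors B n \<omega> \<le> num_colors B N \<omega>" for n
      by (rule num_colors_le_if_no_triggers_from)
    then show "(SUP n. enat (num_colors B n \<omega>)) < \<infinity>"
      by (rule SUP_enat_less_infinity)
  qed
qed

lemma AE_num_colors_ratio_tendsto_1:
  assumes [measurable]: "\<And>i. B i \<in> measurable M (count_space UNIV)"
    and indep: "indep_vars (\<lambda>_. count_space UNIV) B UNIV"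
    and diverges: "\<not> summable (\<lambda>i. prob {\<omega> \<in> space M. B i \<omega>})"
  shows "AE \<omega> in M. (\<lambda>n. real (num_colors B n \<omega>) / (\<Sum>i<n. prob {\<omega> \<in> space M. B i \<omega>})) \<longlonglongrightarrow> 1"
proof -
  define A where "A i = {\<omega> \<in> space M. B i \<omega>}" for i
  have A_events: "A i \<in> events" for i
    unfolding A_def by measurable
  have pairwise_indep: "prob (A i \<inter> A j) = prob (A i) * prob (A j)" if "i \<noteq> j" for i j
  proof -
    have "B k -` {True} \<inter> space M = A k" for k
      unfolding A_def by auto
    moreover have "prob (\<Inter>k\<in>{i, j}. B k -` {True} \<inter> space M) = (\<Prod>k\<in>{i, j}. prob (B k -` {True} \<inter> space M))"
      by (rule indep_varsD[OF indep]) auto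
    ultimately show ?thesis
      using that by simp
  qed
  have colors: "real (num_colors B n \<omega>) = (\<Sum>i<n. indicator (A i) \<omega>)" if "\<omega> \<in> space M" for n \<omega>
    using that unfolding num_colors_def A_def
    by (simp only: of_nat_sum) (intro sum.cong refl, auto simp: indicator_def)
  have "AE \<omega> in M. (\<lambda>n. (\<Sum>i<n. indicator (A i) \<omega>) / (\<Sum>i<n. prob (A i))) \<longlonglongrightarrow> 1"
    using diverges unfolding A_def[symmetric]
    by (intro indicator_count_ratio_tendsto_1[where A = A] pairwise_indep A_events)
  with AE_space show ?thesis
    by eventually_elim (simp add: colors A_def)
qed

lemma AE_SUP_num_colors_infinite:
  assumes "\<And>i. B i \<in> measurable M (count_space UNIV)"
    and "indep_vars (\<lambda>_. count_space UNIV) B UNIV"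
    and diverges: "\<not> summable (\<lambda>i. prob {\<omega> \<in> space M. B i \<omega>})"
  shows "AE \<omega> in M. (SUP n. enat (num_colors B n \<omega>)) = \<infinity>"
proof -
  have "filterlim (\<lambda>n. \<Sum>i<n. prob {\<omega> \<in> space M. B i \<omega>}) at_top sequentially"
    using diverges by (intro filterlim_partial_sums_at_top) simp_all
  with AE_num_colors_ratio_tendsto_1[OF assms] show ?thesis
    by (auto elim!: eventually_mono intro: SUP_enat_eq_infinity filterlim_at_top_if_ratio_tendsto_1)
qed

lemma AE_drawn_color_present:
  assumes [measurable]: "\<And>n. B n \<in> measurable M (count_space UNIV)" "\<And>n. S n \<in> measurable M (count_space UNIV)"
    and draw: "\<And>n h bs c. n \<ge> 1 \<Longrightarrow> length bs = n \<Longrightarrow> \<not> bs ! (n - 1) \<Longrightarrow>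
        measure M {\<omega> \<in> space M. hist S (n - 1) \<omega> = h \<and> trig_hist B n \<omega> = bs \<and> S n \<omega> = c}
        = measure M {\<omega> \<in> space M. hist S (n - 1) \<omega> = h \<and> trig_hist B n \<omega> = bs} * urn_prob F h c"
  shows "AE \<omega> in M. \<forall>n\<ge>1. \<not> B (n - 1) \<omega> \<longrightarrow> S n \<omega> \<in> (\<lambda>m. S m \<omega>) ` {1..<n}"
proof -
  have [measurable]: "Measurable.pred M (\<lambda>\<omega>. hist S k \<omega> = h)" "Measurable.pred M (\<lambda>\<omega>. trig_hist B k \<omega> = bs)"
    for k h bs unfolding hist_eq_iff trig_hist_eq_iff by measurable
  have null: "AE \<omega> in M. \<not> (hist S (n - 1) \<omega> = h \<and> trig_hist B n \<omega> = bs \<and> S n \<omega> = c)"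
    if "1 \<le> n" "length bs = n" "\<not> bs ! (n - 1)" "c \<notin> set h" for n h bs c
  proof (rule AE_I')
    have "measure M {\<omega> \<in> space M. hist S (n - 1) \<omega> = h \<and> trig_hist B n \<omega> = bs \<and> S n \<omega> = c} = 0"
      using draw[OF that(1-3), of h c] that(4) by (simp add: urn_prob_def)
    then show "{\<omega> \<in> space M. hist S (n - 1) \<omega> = h \<and> trig_hist B n \<omega> = bs \<and> S n \<omega> = c} \<in> null_sets M"
      by (intro null_setsI) (simp add: emeasure_eq_measure, measurable)
  qed auto
  have "AE \<omega> in M. 1 \<le> n \<and> length bs = n \<and> \<not> bs ! (n - 1) \<and> c \<notin> set h \<longrightarrow>
      \<not> (hist S (n - 1) \<omega> = h \<and> trig_hist B n \<omega> = bs \<and> S n \<omega> = c)" for n h bs c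
    by (intro AE_impI) (elim conjE, rule null)
  then have "AE \<omega> in M. \<forall>n h bs c. 1 \<le> n \<and> length bs = n \<and> \<not> bs ! (n - 1) \<and> c \<notin> set h \<longrightarrow>
      \<not> (hist S (n - 1) \<omega> = h \<and> trig_hist B n \<omega> = bs \<and> S n \<omega> = c)"
    unfolding AE_all_countable by blast
  then show ?thesis
  proof (rule eventually_mono)
    fix \<omega> assume H: "\<forall>n h bs c. 1 \<le> n \<and> length bs = n \<and> \<not> bs ! (n - 1) \<and> c \<notin> set h \<longrightarrow>
      \<not> (hist S (n - 1) \<omega> = h \<and> trig_hist B n \<omega> = bs \<and> S n \<omega> = c)"
    show "\<forall>n\<ge>1. \<not> B (n - 1) \<omega> \<longrightarrow> S n \<omega> \<in> (\<lambda>m. S m \<omega>) ` {1..<n}"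
    proof (intro allI impI)
      fix n :: nat assume "1 \<le> n" "\<not> B (n - 1) \<omega>"
      then have "S n \<omega> \<in> set (hist S (n - 1) \<omega>)"
        using H[rule_format, where n = n and h = "hist S (n - 1) \<omega>" and bs = "trig_hist B n \<omega>" and c = "S n \<omega>"]
        by (auto simp: trig_hist_def)
      then show "S n \<omega> \<in> (\<lambda>m. S m \<omega>) ` {1..<n}"
        using \<open>1 \<le> n\<close> by (simp add: hist_def)
    qed
  qed
qed

lemma AE_eventually_fresh_colors:
  assumes [measurable]: "\<And>i. B i \<in> measurable M (count_space UNIV)"
    and summable: "summable (\<lambda>i. 1 - prob {\<omega> \<in> space M. B i \<omega>})"
    and trigger: "\<And>n \<omega>. 1 \<le> n \<Longrightarrow> \<omega> \<in> space M \<Longrightarrow> B (n - 1) \<omega> \<Longrightarrow> S n \<omega> = num_colors B n \<omega>"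
    and drawn: "AE \<omega> in M. \<forall>n\<ge>1. \<not> B (n - 1) \<omega> \<longrightarrow> S n \<omega> \<in> (\<lambda>m. S m \<omega>) ` {1..<n}"
  shows "AE \<omega> in M. \<exists>N. \<forall>n\<ge>N. S n \<omega> \<notin> (\<lambda>m. S m \<omega>) ` {1..<n}"
proof -
  have [simp]: "{\<omega> \<in> space M. B i \<omega>} \<in> events" for i
    by measurable
  have "AE \<omega> in M. eventually (\<lambda>n. \<omega> \<in> space M - (space M - {\<omega> \<in> space M. B n \<omega>})) sequentially"
    using summable by (intro borel_cantelli_AE1) (simp_all add: prob_compl emeasure_eq_measure)
  with drawn show ?thesis
  proof eventually_elim
    case (elim \<omega>)
    from elim(2) obtain N where "\<And>i. N \<le> i \<Longrightarrow> \<omega> \<in> space M \<and> B i \<omega>"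
      unfolding eventually_sequentially by auto
    then have \<omega>: "\<omega> \<in> space M" and triggers: "\<And>i. N \<le> i \<Longrightarrow> B i \<omega>"
      by blast+
    have drawn_color: "\<And>n. 1 \<le> n \<Longrightarrow> \<not> B (n - 1) \<omega> \<Longrightarrow> S n \<omega> \<in> (\<lambda>m. S m \<omega>) ` {1..<n}"
      using elim(1) by blast
    have bound: "\<And>n. 1 \<le> n \<Longrightarrow> S n \<omega> \<le> num_colors B n \<omega>"
      using color_le_num_colors[where B = B and S = S and \<omega> = \<omega>, OF trigger[OF _ \<omega>] drawn_color] .
    have "\<forall>n\<ge>Suc N. S n \<omega> \<notin> (\<lambda>m. S m \<omega>) ` {1..<n}"
      using fresh_color_after_triggers[where B = B and S = S and \<omega> = \<omega>, OF trigger[OF _ \<omega>] bound triggers]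
      by simp
    then show ?case
      by blast
  qed
qed

end

theorem theorem3p1:
  fixes M :: "'a measure" and p :: "nat \<Rightarrow> real" and F :: "real \<Rightarrow> real"
    and B :: "nat \<Rightarrow> 'a \<Rightarrow> bool" and S :: "nat \<Rightarrow> 'a \<Rightarrow> nat"
  assumes prob: "prob_space M"
    and p0: "p 0 = 1"
    and p_bounds: "\<And>n. n \<ge> 1 \<Longrightarrow> 0 < p n \<and> p n < 1"
    and F_mono: "strict_mono_on {1..} F"
    and F_nonneg: "\<And>x. x \<ge> 1 \<Longrightarrow> F x \<ge> 0"
    and F_1: "F 1 > 0"
    and B_meas: "\<And>n. B n \<in> measurable M (count_space UNIV)"
    and S_meas: "\<And>n. S n \<in> measurable M (count_space UNIV)"
    and B0: "\<And>\<omega>. \<omega> \<in> space M \<Longrightarrow> B 0 \<omega>"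
    and B_law: "\<And>n. measure M {\<omega> \<in> space M. B n \<omega>} = p n"
    and B_indep: "prob_space.indep_vars M (\<lambda>_. count_space UNIV) B UNIV"
    and B_indep_past: "\<And>n h bs. measure M {\<omega> \<in> space M. B n \<omega> \<and> hist S n \<omega> = h \<and> trig_hist B n \<omega> = bs}
        = p n * measure M {\<omega> \<in> space M. hist S n \<omega> = h \<and> trig_hist B n \<omega> = bs}"
    and trigger: "\<And>n \<omega>. n \<ge> 1 \<Longrightarrow> \<omega> \<in> space M \<Longrightarrow> B (n - 1) \<omega> \<Longrightarrow> S n \<omega> = num_colors B n \<omega>"
    and draw: "\<And>n h bs c. n \<ge> 1 \<Longrightarrow> length bs = n \<Longrightarrow> \<not> bs ! (n - 1) \<Longrightarrow>
        measure M {\<omega> \<in> space M. hist S (n - 1) \<omega> = h \<and> trig_hist B n \<omega> = bs \<and> S n \<omega> = c}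
        = measure M {\<omega> \<in> space M. hist S (n - 1) \<omega> = h \<and> trig_hist B n \<omega> = bs} * urn_prob F h c"
  shows "(summable p \<longrightarrow>
            (AE \<omega> in M. (SUP n. enat (num_colors B n \<omega>)) < \<infinity>))
       \<and> (\<not> summable p \<longrightarrow>
            (AE \<omega> in M. (SUP n. enat (num_colors B n \<omega>)) = \<infinity>)
          \<and> (AE \<omega> in M. (\<lambda>n. real (num_colors B n \<omega>) / (\<Sum>i<n. p i)) \<longlonglongrightarrow> 1)
          \<and> (summable (\<lambda>n. 1 - p n) \<longrightarrow>
               (AE \<omega> in M. (\<exists>N. \<forall>n\<ge>N. n \<ge> 1 \<and> S n \<omega> \<notin> (\<lambda>m. S m \<omega>) ` {1..<n})
                 \<and> (\<forall>c. finite {n. n \<ge> 1 \<and> S n \<omega> = c})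
                 \<and> finite {c. card {n. n \<ge> 1 \<and> S n \<omega> = c} \<ge> 2})))"
proof -
  interpret prob_space M by (rule prob)
  have p_eq: "p = (\<lambda>i. prob {\<omega> \<in> space M. B i \<omega>})"
    using B_law by (simp add: fun_eq_iff)
  show ?thesis
  proof (intro conjI impI)
    assume "summable p"
    then show "AE \<omega> in M. (SUP n. enat (num_colors B n \<omega>)) < \<infinity>"
      unfolding p_eq by (rule AE_SUP_num_colors_finite[OF B_meas])
  next
    assume "\<not> summable p"
    then show "AE \<omega> in M. (SUP n. enat (num_colors B n \<omega>)) = \<infinity>"
      unfolding p_eq by (rule AE_SUP_num_colors_infinite[OF B_meas B_indep])
  next
    assume "\<not> summable p"
    then show "AE \<omega> in M. (\<lambda>n. real (num_colors B n \<omega>) / (\<Sum>i<n. p i)) \<longlonglongrightarrow> 1"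
      unfolding p_eq by (rule AE_num_colors_ratio_tendsto_1[OF B_meas B_indep])
  next
    assume "summable (\<lambda>n. 1 - p n)"
    then have "AE \<omega> in M. \<exists>N. \<forall>n\<ge>N. S n \<omega> \<notin> (\<lambda>m. S m \<omega>) ` {1..<n}"
      unfolding p_eq
      by (rule AE_eventually_fresh_colors[OF B_meas _ trigger AE_drawn_color_present[OF B_meas S_meas draw]])
    then show "AE \<omega> in M. (\<exists>N. \<forall>n\<ge>N. n \<ge> 1 \<and> S n \<omega> \<notin> (\<lambda>m. S m \<omega>) ` {1..<n})
      \<and> (\<forall>c. finite {n. n \<ge> 1 \<and> S n \<omega> = c}) \<and> finite {c. card {n. n \<ge> 1 \<and> S n \<omega> = c} \<ge> 2}"
    proof (rule eventually_mono)
      fix \<omega> assume "\<exists>N. \<forall>n\<ge>N. S n \<omega> \<notin> (\<lambda>m. S m \<omega>) ` {1..<n}"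
      then obtain N where fresh: "\<And>n. N \<le> n \<Longrightarrow> S n \<omega> \<notin> (\<lambda>m. S m \<omega>) ` {1..<n}"
        by blast
      then have "\<forall>n\<ge>Suc N. n \<ge> 1 \<and> S n \<omega> \<notin> (\<lambda>m. S m \<omega>) ` {1..<n}"
        by simp
      with finite_fibre_if_eventually_fresh[OF fresh] finite_repeated_values_if_eventually_fresh[OF fresh]
      show "(\<exists>N. \<forall>n\<ge>N. n \<ge> 1 \<and> S n \<omega> \<notin> (\<lambda>m. S m \<omega>) ` {1..<n})
        \<and> (\<forall>c. finite {n. n \<ge> 1 \<and> S n \<omega> = c}) \<and> finite {c. card {n. n \<ge> 1 \<and> S n \<omega> = c} \<ge> 2}"
        by blast
    qed
  qed
qed

end
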